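(* Let $\lambda$ be a nonzero real number, $x$ real, and $n\ge0$ an integer. Then $$\sum_{k=0}^{n}S_{1,\lambda}(n,k)\,\mathcal{E}_{k,\lambda}(x)=n!\sum_{k=0}^{n}\binom{x}{k}\Big(-\frac{1}{2}\Big)^{n-k},$$ and $$\mathcal{E}_{n,\lambda}(x)=\sum_{k=0}^{n}k!\,S_{2,\lambda}(n,k)\sum_{j=0}^{k}\binom{x}{j}\Big(-\frac{1}{2}\Big)^{k-j}.$$
   Context: For real $x$ and integer $k\ge0$: $(x)_{0,\lambda}=1$, $(x)_{k,\lambda}=x(x-\lambda)\cdots(x-(k-1)\lambda)$; $(x)_0=1$, $(x)_k=x(x-1)\cdots(x-k+1)$. The degenerate exponential is $e_\lambda^x(t)=\sum_{k\ge0}(x)_{k,\lambda}t^k/k!=(1+\lambda t)^{x/\lambda}$, and $e_\lambda(t)=e^1_\lambda(t)$. The degenerate Euler polynomials are defined by $\frac{2}{e_\lambda(t)+1}e_\lambda^x(t)=\sum_{n\ge0}\mathcal{E}_{n,\lambda}(x)\frac{t^n}{n!}$. The degenerate Stirling numbers are defined by $(x)_{n}=\sum_{k=0}^{n}S_{1,\lambda}(n,k)(x)_{k,\lambda}$ and $(x)_{n,\lambda}=\sum_{k=0}^{n}S_{2,\lambda}(n,k)(x)_{k}$ ($n\ge0$). *)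

theory Defs
  imports Complex_Main "HOL-Computational_Algebra.Formal_Power_Series"
begin

definition dfall :: "real \<Rightarrow> nat \<Rightarrow> real \<Rightarrow> real" where
  "dfall lam k x = (\<Prod>i<k. x - of_nat i * lam)"

definition falling :: "nat \<Rightarrow> real \<Rightarrow> real" where
  "falling k x = (\<Prod>i<k. x - of_nat i)"

definition deg_exp_fps :: "real \<Rightarrow> real \<Rightarrow> real fps" where
  "deg_exp_fps lam x = Abs_fps (\<lambda>k. dfall lam k x / fact k)"

definition deg_euler :: "real \<Rightarrow> nat \<Rightarrow> real \<Rightarrow> real" where
  "deg_euler lam n x =
     fact n * fps_nth (2 * inverse (deg_exp_fps lam 1 + 1) * deg_exp_fps lam x) n"

definition deg_stirling1 :: "real \<Rightarrow> nat \<Rightarrow> nat \<Rightarrow> real" where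
  "deg_stirling1 lam n =
     (THE c. (\<forall>k>n. c k = 0) \<and> (\<forall>x. falling n x = (\<Sum>k\<le>n. c k * dfall lam k x)))"

definition deg_stirling2 :: "real \<Rightarrow> nat \<Rightarrow> nat \<Rightarrow> real" where
  "deg_stirling2 lam n =
     (THE c. (\<forall>k>n. c k = 0) \<and> (\<forall>x. dfall lam n x = (\<Sum>k\<le>n. c k * falling k x)))"

end

(*
  Both identities rest on one uniqueness principle: a real polynomial f with
  f(x + 1) + f(x) = 0 for all x is 2-periodic, hence constant, hence zero.
  Since e_lambda^(x+1)(t) = e_lambda(t) e_lambda^x(t), the generating function gives
  E_{n,lambda}(x + 1) + E_{n,lambda}(x) = 2 (x)_{n,lambda}, while sum_k binom(x,k) (-1/2)^(n-k)
  satisfies the same relation with right-hand side 2 binom(x,n) = 2 (x)_n / n!.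
  Expanding (x)_n and (x)_{n,lambda} in each other's bases, the two sides of each identity
  are polynomials with the same image under f |-> f(x + 1) + f(x), so they agree.
*)
theory Submission
  imports Defs "HOL-Computational_Algebra.Polynomial" "HOL-Analysis.Weierstrass_Theorems"
begin

lemma falling_eq_dfall: "falling = dfall 1"
  by (simp add: fun_eq_iff falling_def dfall_def)

lemma dfall_Suc: "dfall lam (Suc k) x = dfall lam k x * (x - of_nat k * lam)"
  by (simp add: dfall_def lessThan_Suc mult.commute)

lemma fact_mult_gchoose: "fact k * (x gchoose k) = falling k (x::real)"
  by (simp add: gbinomial_prod_rev falling_def atLeast0LessThan)

lemma real_polynomial_function_dfall: "real_polynomial_function (dfall lam k)"
  unfolding dfall_def
  by (simp add: real_polynomial_function.intros real_polynomial_function_prod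
      real_polynomial_function_diff)

lemma dfall_eq_power_mult_gchoose:
  assumes "lam \<noteq> 0"
  shows "dfall lam k x = lam ^ k * fact k * ((x / lam) gchoose k)"
proof -
  have "lam ^ k * fact k * ((x / lam) gchoose k) = (\<Prod>i<k. lam * (x / lam - of_nat i))"
    by (simp add: mult.assoc fact_mult_gchoose falling_def prod.distrib)
  also have "\<dots> = dfall lam k x"
    unfolding dfall_def using assms by (intro prod.cong) (auto simp: field_simps)
  finally show ?thesis ..
qed

definition dfall_poly :: "real \<Rightarrow> nat \<Rightarrow> real poly" where
  "dfall_poly lam k = (\<Prod>i<k. [:- of_nat i * lam, 1:])"

lemma poly_dfall_poly: "poly (dfall_poly lam k) = dfall lam k"
  by (simp add: fun_eq_iff dfall_poly_def dfall_def poly_prod)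

lemma degree_dfall_poly: "degree (dfall_poly lam k) = k"
  by (simp add: dfall_poly_def degree_prod_eq_sum_degree)

lemma dfall_poly_nonzero: "dfall_poly lam k \<noteq> 0"
proof -
  have "lead_coeff (dfall_poly lam k) = 1"
    by (simp add: dfall_poly_def lead_coeff_prod)
  then show ?thesis by auto
qed

lemma sum_smult_graded_eq_0_imp_eq_0:
  fixes p :: "nat \<Rightarrow> 'a::idom poly"
  assumes degree: "\<And>k. degree (p k) = k" and nonzero: "\<And>k. p k \<noteq> 0"
    and "(\<Sum>k\<le>n. smult (d k) (p k)) = 0" and "k \<le> n"
  shows "d k = 0"
  using assms(3,4)
proof (induction n arbitrary: k)
  case 0
  then show ?case using nonzero[of 0] by simp
next
  case (Suc n)
  have "coeff (\<Sum>k\<le>Suc n. smult (d k) (p k)) (Suc n) = d (Suc n) * lead_coeff (p (Suc n))"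
    by (simp add: coeff_sum degree coeff_eq_0)
  then have top: "d (Suc n) = 0"
    using Suc.prems(1) nonzero[of "Suc n"] by (metis coeff_0 leading_coeff_0_iff mult_eq_0_iff)
  show ?case
  proof (cases "k = Suc n")
    case False
    then show ?thesis using Suc top by simp
  qed (use top in simp)
qed

lemma sum_dfall_eq_0_imp_eq_0:
  assumes "\<And>x. (\<Sum>k\<le>n. d k * dfall lam k x) = 0" and "k \<le> n"
  shows "d k = 0"
proof (rule sum_smult_graded_eq_0_imp_eq_0[OF degree_dfall_poly dfall_poly_nonzero _ \<open>k \<le> n\<close>])
  have "poly (\<Sum>k\<le>n. smult (d k) (dfall_poly lam k)) = poly 0"
    using assms(1) by (simp add: fun_eq_iff poly_sum poly_dfall_poly)
  then show "(\<Sum>k\<le>n. smult (d k) (dfall_poly lam k)) = 0"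
    using poly_eq_poly_eq_iff by blast
qed

lemma dfall_expansion_exists:
  "\<exists>c. (\<forall>k>n. c k = 0) \<and> (\<forall>x. dfall mu n x = (\<Sum>k\<le>n. c k * dfall lam k x))"
proof (induction n)
  case 0
  show ?case by (rule exI[of _ "\<lambda>k. if k = 0 then 1 else 0"]) (simp add: dfall_def)
next
  case (Suc n)
  then obtain c where c0: "\<forall>k>n. c k = 0"
    and c: "\<forall>x. dfall mu n x = (\<Sum>k\<le>n. c k * dfall lam k x)"
    by blast
  define c' where
    "c' k = (if k = 0 then 0 else c (k - 1)) + (of_nat k * lam - of_nat n * mu) * c k" for k
  have "dfall mu (Suc n) x = (\<Sum>k\<le>Suc n. c' k * dfall lam k x)" for x
  proof -
    have "dfall mu (Suc n) x = (\<Sum>k\<le>n. c k * (dfall lam k x * (x - of_nat n * mu)))"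
      by (simp add: dfall_Suc c sum_distrib_right mult.assoc)
    also have "\<dots> = (\<Sum>k\<le>n. c k * dfall lam (Suc k) x)
        + (\<Sum>k\<le>n. (of_nat k * lam - of_nat n * mu) * c k * dfall lam k x)"
      by (simp add: dfall_Suc sum.distrib[symmetric] algebra_simps)
    also have "(\<Sum>k\<le>n. c k * dfall lam (Suc k) x)
        = (\<Sum>k\<le>Suc n. (if k = 0 then 0 else c (k - 1)) * dfall lam k x)"
      by (subst sum.atMost_Suc_shift) simp
    also have "(\<Sum>k\<le>n. (of_nat k * lam - of_nat n * mu) * c k * dfall lam k x)
        = (\<Sum>k\<le>Suc n. (of_nat k * lam - of_nat n * mu) * c k * dfall lam k x)"
      using c0 by simp
    finally show ?thesis by (simp add: c'_def sum.distrib[symmetric] algebra_simps)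
  qed
  moreover have "\<forall>k>Suc n. c' k = 0" using c0 by (simp add: c'_def)
  ultimately show ?case by blast
qed

lemma dfall_expansion_unique:
  "\<exists>!c. (\<forall>k>n. c k = 0) \<and> (\<forall>x. dfall mu n x = (\<Sum>k\<le>n. c k * dfall lam k x))"
proof (rule ex_ex1I[OF dfall_expansion_exists])
  fix c c'
  assume c: "(\<forall>k>n. c k = 0) \<and> (\<forall>x. dfall mu n x = (\<Sum>k\<le>n. c k * dfall lam k x))"
    and c': "(\<forall>k>n. c' k = 0) \<and> (\<forall>x. dfall mu n x = (\<Sum>k\<le>n. c' k * dfall lam k x))"
  have "(\<Sum>k\<le>n. (c k - c' k) * dfall lam k x) = 0" for x
    using c c' by (simp add: left_diff_distrib sum_subtractf)
  then have "c k = c' k" if "k \<le> n" for k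
    using sum_dfall_eq_0_imp_eq_0 that by fastforce
  then show "c = c'"
    using c c' by (metis ext not_le)
qed

lemma falling_eq_sum_deg_stirling1:
  "falling n x = (\<Sum>k\<le>n. deg_stirling1 lam n k * dfall lam k x)"
  using theI'[OF dfall_expansion_unique[of n 1 lam]]
  unfolding deg_stirling1_def falling_eq_dfall by blast

lemma dfall_eq_sum_deg_stirling2:
  "dfall lam n x = (\<Sum>k\<le>n. deg_stirling2 lam n k * falling k x)"
  using theI'[OF dfall_expansion_unique[of n lam 1]]
  unfolding deg_stirling2_def falling_eq_dfall by blast

lemma real_polynomial_function_imp_poly:
  assumes "real_polynomial_function f"
  obtains p where "f = poly p"
proof -
  obtain a n where "f = (\<lambda>x. \<Sum>i\<le>n. a i * x ^ i)"
    using assms real_polynomial_function_iff_sum by blast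
  then have "f = poly (\<Sum>i\<le>n. monom (a i) i)"
    by (simp add: fun_eq_iff poly_sum poly_monom)
  then show ?thesis ..
qed

lemma real_polynomial_function_antiperiodic_eq_0:
  fixes g :: "real \<Rightarrow> real"
  assumes "real_polynomial_function g" and antiperiodic: "\<And>x. g (x + 1) = - g x"
  shows "g x = 0"
proof -
  obtain p where p: "g = poly p"
    using real_polynomial_function_imp_poly[OF assms(1)] .
  have periodic: "g (x + 2) = g x" for x
    using antiperiodic[of "x + 1"] antiperiodic[of x] by (simp add: add.assoc)
  have even: "g (of_nat (2 * m)) = g 0" for m
  proof (induction m)
    case (Suc m)
    then show ?case
      using periodic[of "of_nat (2 * m)"] by (simp add: add.commute)
  qed simp
  define q where "q = p - [:g 0:]"
  have "range (\<lambda>m. real (2 * m)) \<subseteq> {x. poly q x = 0}"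
    using even by (auto simp: q_def p)
  moreover have "infinite (range (\<lambda>m. real (2 * m)))"
    by (rule range_inj_infinite) (auto simp: inj_def)
  ultimately have "infinite {x. poly q x = 0}"
    using finite_subset by blast
  then have "q = 0"
    using poly_roots_finite by blast
  have g_eq_g0: "g y = g 0" for y
    using poly_0[of y] unfolding \<open>q = 0\<close>[symmetric] by (simp add: q_def p)
  have "g 0 = 0"
    using antiperiodic[of 0] g_eq_g0[of 1] by simp
  then show ?thesis
    using g_eq_g0 by simp
qed

lemma real_polynomial_function_eq_if_shift_sums_eq:
  fixes f g :: "real \<Rightarrow> real"
  assumes "real_polynomial_function f" "real_polynomial_function g"
    and "\<And>x. f (x + 1) + f x = g (x + 1) + g x"
  shows "f x = g x"
proof -
  have "f (y + 1) - g (y + 1) = - (f y - g y)" for y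
    using assms(3)[of y] by simp
  then have "f x - g x = 0"
    using real_polynomial_function_antiperiodic_eq_0[of "\<lambda>x. f x - g x"]
      real_polynomial_function_diff[OF assms(1,2)] by blast
  then show ?thesis by simp
qed

lemma deg_exp_fps_add:
  assumes "lam \<noteq> 0"
  shows "deg_exp_fps lam (x + y) = deg_exp_fps lam x * deg_exp_fps lam y"
proof (rule fps_ext)
  fix n
  have "fps_nth (deg_exp_fps lam x * deg_exp_fps lam y) n
      = (\<Sum>i=0..n. lam ^ n * (((x / lam) gchoose i) * ((y / lam) gchoose (n - i))))"
    unfolding fps_mult_nth deg_exp_fps_def fps_nth_Abs_fps
  proof (intro sum.cong refl)
    fix i assume "i \<in> {0..n}"
    then have "lam ^ i * lam ^ (n - i) = lam ^ n" by (simp flip: power_add)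
    then show "dfall lam i x / fact i * (dfall lam (n - i) y / fact (n - i))
        = lam ^ n * (((x / lam) gchoose i) * ((y / lam) gchoose (n - i)))"
      by (simp add: dfall_eq_power_mult_gchoose[OF assms] algebra_simps)
  qed
  also have "\<dots> = lam ^ n * ((x / lam + y / lam) gchoose n)"
    by (simp add: gbinomial_Vandermonde flip: sum_distrib_left)
  also have "\<dots> = fps_nth (deg_exp_fps lam (x + y)) n"
    by (simp add: deg_exp_fps_def dfall_eq_power_mult_gchoose[OF assms] add_divide_distrib)
  finally show "fps_nth (deg_exp_fps lam (x + y)) n = fps_nth (deg_exp_fps lam x * deg_exp_fps lam y) n" ..
qed

lemma deg_euler_shift_add:
  assumes "lam \<noteq> 0"
  shows "deg_euler lam n (x + 1) + deg_euler lam n x = 2 * dfall lam n x"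
proof -
  define A where "A = deg_exp_fps lam 1 + 1"
  have "fps_nth A 0 \<noteq> 0"
    by (simp add: A_def deg_exp_fps_def dfall_def)
  have "2 * inverse A * deg_exp_fps lam (x + 1) + 2 * inverse A * deg_exp_fps lam x
      = 2 * deg_exp_fps lam x * (inverse A * A)"
    by (simp add: deg_exp_fps_add[OF assms] A_def algebra_simps)
  also have "\<dots> = 2 * deg_exp_fps lam x"
    using inverse_mult_eq_1[OF \<open>fps_nth A 0 \<noteq> 0\<close>] by simp
  finally have "fps_nth (2 * inverse A * deg_exp_fps lam (x + 1)) n + fps_nth (2 * inverse A * deg_exp_fps lam x) n
      = 2 * (dfall lam n x / fact n)"
    by (metis fps_add_nth fps_mult_left_const_nth numeral_fps_const deg_exp_fps_def fps_nth_Abs_fps)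
  then show ?thesis
    by (simp add: deg_euler_def flip: A_def distrib_left)
qed

lemma real_polynomial_function_deg_euler: "real_polynomial_function (deg_euler lam n)"
proof -
  define B where "B = 2 * inverse (deg_exp_fps lam 1 + 1)"
  have "deg_euler lam n = (\<lambda>x. fact n * (\<Sum>i=0..n. fps_nth B i * (dfall lam (n - i) x / fact (n - i))))"
    by (simp add: fun_eq_iff deg_euler_def B_def fps_mult_nth deg_exp_fps_def)
  then show ?thesis
    by (simp add: real_polynomial_function.intros real_polynomial_function_sum
        real_polynomial_function_divide real_polynomial_function_dfall)
qed
definition gchoose_euler_sum :: "nat \<Rightarrow> real \<Rightarrow> real" where
  "gchoose_euler_sum n x = (\<Sum>k\<le>n. (x gchoose k) * (- 1 / 2) ^ (n - k))"

lemma gchoose_euler_sum_Suc: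
  "gchoose_euler_sum (Suc n) x = - 1 / 2 * gchoose_euler_sum n x + (x gchoose Suc n)"
proof -
  have "(\<Sum>k\<le>n. (x gchoose k) * (- 1 / 2) ^ (Suc n - k)) = - 1 / 2 * gchoose_euler_sum n x"
    unfolding gchoose_euler_sum_def sum_distrib_left
    by (intro sum.cong) (auto simp: Suc_diff_le)
  then show ?thesis
    by (simp add: gchoose_euler_sum_def)
qed

lemma gchoose_euler_sum_shift_add:
  "gchoose_euler_sum n (x + 1) + gchoose_euler_sum n x = 2 * (x gchoose n)"
proof (induction n)
  case (Suc n)
  then show ?case
    unfolding gchoose_euler_sum_Suc gbinomial_Suc_Suc by linarith
qed (simp add: gchoose_euler_sum_def)

lemma real_polynomial_function_gchoose_euler_sum:
  "real_polynomial_function (gchoose_euler_sum n)"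
proof -
  have "(\<lambda>x. x gchoose k) = (\<lambda>x. dfall 1 k x / fact k)" for k
    by (simp add: fun_eq_iff field_simps fact_mult_gchoose flip: falling_eq_dfall)
  then have gchoose: "real_polynomial_function (\<lambda>x. x gchoose k)" for k
    using real_polynomial_function_divide[OF real_polynomial_function_dfall] by metis
  show ?thesis
    unfolding gchoose_euler_sum_def
    by (intro real_polynomial_function_sum finite_atMost real_polynomial_function.intros(2,4) gchoose)
qed

lemma sum_deg_stirling1_deg_euler:
  assumes "lam \<noteq> 0"
  shows "(\<Sum>k\<le>n. deg_stirling1 lam n k * deg_euler lam k x) = fact n * gchoose_euler_sum n x"
proof (rule real_polynomial_function_eq_if_shift_sums_eq
    [where f = "\<lambda>x. \<Sum>k\<le>n. deg_stirling1 lam n k * deg_euler lam k x"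
       and g = "\<lambda>x. fact n * gchoose_euler_sum n x"])
  show "real_polynomial_function (\<lambda>x. \<Sum>k\<le>n. deg_stirling1 lam n k * deg_euler lam k x)"
    by (intro real_polynomial_function_sum finite_atMost real_polynomial_function.intros(2,4)
        real_polynomial_function_deg_euler)
  show "real_polynomial_function (\<lambda>x. fact n * gchoose_euler_sum n x)"
    by (intro real_polynomial_function.intros(2,4) real_polynomial_function_gchoose_euler_sum)
  fix y
  have "(\<Sum>k\<le>n. deg_stirling1 lam n k * deg_euler lam k (y + 1))
      + (\<Sum>k\<le>n. deg_stirling1 lam n k * deg_euler lam k y)
      = (\<Sum>k\<le>n. deg_stirling1 lam n k * (deg_euler lam k (y + 1) + deg_euler lam k y))"
    by (simp add: distrib_left sum.distrib)
  also have "\<dots> = 2 * (\<Sum>k\<le>n. deg_stirling1 lam n k * dfall lam k y)"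
    by (simp add: deg_euler_shift_add[OF assms] sum_distrib_left mult_ac)
  also have "\<dots> = 2 * falling n y"
    by (simp add: falling_eq_sum_deg_stirling1[of n y lam])
  also have "\<dots> = fact n * gchoose_euler_sum n (y + 1) + fact n * gchoose_euler_sum n y"
    by (simp add: gchoose_euler_sum_shift_add fact_mult_gchoose[symmetric] flip: distrib_left)
  finally show "(\<Sum>k\<le>n. deg_stirling1 lam n k * deg_euler lam k (y + 1))
      + (\<Sum>k\<le>n. deg_stirling1 lam n k * deg_euler lam k y)
      = fact n * gchoose_euler_sum n (y + 1) + fact n * gchoose_euler_sum n y" .
qed

lemma deg_euler_eq_sum_deg_stirling2:
  assumes "lam \<noteq> 0"
  shows "deg_euler lam n x = (\<Sum>k\<le>n. fact k * deg_stirling2 lam n k * gchoose_euler_sum k x)"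
proof (rule real_polynomial_function_eq_if_shift_sums_eq
    [where f = "deg_euler lam n"
       and g = "\<lambda>x. \<Sum>k\<le>n. fact k * deg_stirling2 lam n k * gchoose_euler_sum k x"])
  show "real_polynomial_function (deg_euler lam n)"
    by (rule real_polynomial_function_deg_euler)
  show "real_polynomial_function (\<lambda>x. \<Sum>k\<le>n. fact k * deg_stirling2 lam n k * gchoose_euler_sum k x)"
    by (intro real_polynomial_function_sum finite_atMost real_polynomial_function.intros(2,4)
        real_polynomial_function_gchoose_euler_sum)
  fix y
  have "deg_euler lam n (y + 1) + deg_euler lam n y = 2 * (\<Sum>k\<le>n. deg_stirling2 lam n k * falling k y)"
    by (simp add: deg_euler_shift_add[OF assms] dfall_eq_sum_deg_stirling2[of lam n y])
  also have "\<dots> = (\<Sum>k\<le>n. fact k * deg_stirling2 lam n k *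
      (gchoose_euler_sum k (y + 1) + gchoose_euler_sum k y))"
    by (simp add: gchoose_euler_sum_shift_add sum_distrib_left fact_mult_gchoose[symmetric] mult_ac)
  also have "\<dots> = (\<Sum>k\<le>n. fact k * deg_stirling2 lam n k * gchoose_euler_sum k (y + 1))
      + (\<Sum>k\<le>n. fact k * deg_stirling2 lam n k * gchoose_euler_sum k y)"
    by (simp add: distrib_left sum.distrib)
  finally show "deg_euler lam n (y + 1) + deg_euler lam n y
      = (\<Sum>k\<le>n. fact k * deg_stirling2 lam n k * gchoose_euler_sum k (y + 1))
      + (\<Sum>k\<le>n. fact k * deg_stirling2 lam n k * gchoose_euler_sum k y)" .
qed

theorem theorem4:
  fixes lam x :: real and n :: nat
  assumes "lam \<noteq> 0"
  shows "(\<Sum>k\<le>n. deg_stirling1 lam n k * deg_euler lam k x)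
           = fact n * (\<Sum>k\<le>n. (x gchoose k) * (- 1 / 2) ^ (n - k))
       \<and> deg_euler lam n x
           = (\<Sum>k\<le>n. fact k * deg_stirling2 lam n k *
                (\<Sum>j\<le>k. (x gchoose j) * (- 1 / 2) ^ (k - j)))"
  using sum_deg_stirling1_deg_euler[OF assms] deg_euler_eq_sum_deg_stirling2[OF assms]
  by (simp add: gchoose_euler_sum_def)

end
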